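(* Let $$A= \begin{pmatrix} 1& -2& 2\\ 2&-1& 2\\ 2&-2& 3 \end{pmatrix}.$$ For every positive integer $n$, the triple $A^n(3,4,5)^\top$ is a primitive Pythagorean triple $(x,y,z)$, and the inradius of the triangle with side lengths $x,y,z$ is $n+1$.
   Context: A primitive Pythagorean triple is a triple $(x,y,z)$ of positive integers with $x^2+y^2=z^2$, $\gcd(x,y)=1$ and $x$ odd. Triples are regarded as row vectors and $\top$ denotes transpose. *)

theory Defs
  imports "HOL-Analysis.Analysis"
begin

primrec matpow :: "'a::comm_ring_1^'n^'n \<Rightarrow> nat \<Rightarrow> 'a^'n^'n" where
  "matpow A 0 = mat 1"
| "matpow A (Suc k) = A ** matpow A k"

definition A_mat :: "int^3^3" where
  "A_mat = vector [vector [1, -2, 2], vector [2, -1, 2], vector [2, -2, 3]]"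

definition v345 :: "int^3" where
  "v345 = vector [3, 4, 5]"

definition primitive_pythagorean_triple :: "int \<Rightarrow> int \<Rightarrow> int \<Rightarrow> bool" where
  "primitive_pythagorean_triple x y z \<longleftrightarrow>
     x > 0 \<and> y > 0 \<and> z > 0 \<and> x^2 + y^2 = z^2 \<and> gcd x y = 1 \<and> odd x"

text \<open>Inradius of a triangle with side lengths a, b, c: area / semiperimeter, area by Heron.\<close>
definition inradius :: "real \<Rightarrow> real \<Rightarrow> real \<Rightarrow> real" where
  "inradius a b c = (let s = (a + b + c) / 2 in sqrt (s * (s - a) * (s - b) * (s - c)) / s)"

end

theory Submission
  imports Defs
begin

text \<open>The matrix A maps the triple (2k+1, 2k(k+1), 2k^2+2k+1) to the triple of the same shape
  with k replaced by k+1, and (3,4,5) is the member k = 1; hence A^n(3,4,5) is the member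
  k = n+1, which is primitive since (2k+1)^2 - 2\<cdot>2k(k+1) = 1. The inradius of a right triangle
  with legs a, b and hypotenuse c is (a+b-c)/2, which here equals k.\<close>

lemma inradius_right_triangle:
  fixes a b c :: real
  assumes "a > 0" "b > 0" "c > 0" "a\<^sup>2 + b\<^sup>2 = c\<^sup>2"
  shows "inradius a b c = (a + b - c) / 2"
proof -
  define s where "s = (a + b + c) / 2"
  have "s * (s - a) * (s - b) * (s - c) = (a * b / 2)\<^sup>2"
    using assms(4) unfolding s_def by (simp add: field_simps power2_eq_square) algebra
  then have "inradius a b c = a * b / (a + b + c)"
    using assms(1,2) by (simp add: inradius_def s_def Let_def)
  also have "\<dots> = (a + b - c) / 2"
    using assms by (simp add: field_simps power2_eq_square)
  finally show ?thesis .
qed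

lemma A_mat_mult_vector:
  "A_mat *v vector [a, b, c] = vector [a - 2*b + 2*c, 2*a - b + 2*c, 2*a - 2*b + 3*c]"
  by (simp add: vec_eq_iff forall_3 matrix_vector_mult_def sum_3 A_mat_def)

lemma matpow_A_mat_v345:
  fixes n :: nat
  defines "k \<equiv> int n + 1"
  shows "matpow A_mat n *v v345 = vector [2*k + 1, 2*k*(k + 1), 2*k\<^sup>2 + 2*k + 1]"
  unfolding k_def
proof (induction n)
  case 0
  show ?case by (simp add: v345_def)
next
  case (Suc n)
  have "matpow A_mat (Suc n) *v v345 = A_mat *v (matpow A_mat n *v v345)"
    by (simp add: matrix_vector_mul_assoc)
  then show ?case
    unfolding Suc A_mat_mult_vector by (simp add: algebra_simps power2_eq_square)
qed

lemma primitive_pythagorean_triple_consecutive: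
  fixes k :: int
  assumes "k > 0"
  shows "primitive_pythagorean_triple (2*k + 1) (2*k*(k + 1)) (2*k\<^sup>2 + 2*k + 1)"
proof -
  have "coprime (2*k + 1) (2*k*(k + 1))"
  proof (rule coprimeI)
    fix d
    assume "d dvd 2*k + 1" "d dvd 2*k*(k + 1)"
    then have "d dvd (2*k + 1) * (2*k + 1) - 2 * (2*k*(k + 1))"
      by (meson dvd_diff dvd_mult dvd_mult2)
    also have "(2*k + 1) * (2*k + 1) - 2 * (2*k*(k + 1)) = 1"
      by (simp add: algebra_simps)
    finally show "is_unit d" .
  qed
  then show ?thesis
    using assms unfolding primitive_pythagorean_triple_def
    by (simp add: add_pos_pos algebra_simps power2_eq_square)
qed

theorem mainTheorem2:
  fixes n :: nat
  assumes "n \<ge> 1"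
  shows "let w = matpow A_mat n *v v345 in
           primitive_pythagorean_triple (w $ 1) (w $ 2) (w $ 3) \<and>
           inradius (of_int (w $ 1)) (of_int (w $ 2)) (of_int (w $ 3)) = real n + 1"
proof -
  define k where "k = int n + 1"
  have "k > 0" unfolding k_def by simp
  have triple: "primitive_pythagorean_triple (2*k + 1) (2*k*(k + 1)) (2*k\<^sup>2 + 2*k + 1)"
    using \<open>k > 0\<close> by (rule primitive_pythagorean_triple_consecutive)
  have "(2 * real_of_int k + 1)\<^sup>2 + (2 * real_of_int k * (real_of_int k + 1))\<^sup>2
      = (2 * (real_of_int k)\<^sup>2 + 2 * real_of_int k + 1)\<^sup>2"
    by (simp add: power2_eq_square algebra_simps)
  then have "inradius (2 * real_of_int k + 1) (2 * real_of_int k * (real_of_int k + 1))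
      (2 * (real_of_int k)\<^sup>2 + 2 * real_of_int k + 1) = real_of_int k"
    using \<open>k > 0\<close> by (simp add: inradius_right_triangle add_pos_pos power2_eq_square algebra_simps)
  with triple show ?thesis
    by (simp add: matpow_A_mat_v345 k_def)
qed

end
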